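(* Let $X$ be a metric space, let $A\subseteq X$ be nonempty and let $Y$ be a hyperconvex metric space. Then for every $f\in\mathcal{N}(A,Y)$, the set $\Phi_c(f)$ of all $f'\in\mathcal{N}(X,Y)$ with $f'|_A=f$ and $f'(X)\subseteq\mathrm{cov}(f(A))$ is externally hyperconvex in $(\mathcal{N}(X,Y),d_\infty)$.
   Context: A metric space $Y$ is hyperconvex if $\bigcap_\alpha B(x_\alpha,r_\alpha)\ne\emptyset$ for every family of points $x_\alpha$ and $r_\alpha>0$ with $d(x_\alpha,x_\beta)\le r_\alpha+r_\beta$ ($B$ = closed ball). A subset $E$ of a metric space $Z$ is externally hyperconvex if for any family $\{x_\alpha\}\subseteq Z$ and reals $\{r_\alpha\}$ with $d(x_\alpha,x_\beta)\le r_\alpha+r_\beta$ and $\mathrm{dist}(x_\alpha,E)\le r_\alpha$, one has $\bigcap_\alpha B(x_\alpha,r_\alpha)\cap E\ne\emptyset$. For nonempty bounded $D\subseteq Y$, $\mathrm{cov}(D)$ is the intersection of all closed balls containing $D$. $\mathcal{N}(X,Y)$ is the set of bounded nonexpansive maps with supremum metric $d_\infty$. *)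

theory Defs
  imports "HOL-Analysis.Analysis"
begin

text \<open>Hyperconvexity of a subset Y of a metric space (families of points with radii
  are represented by the set F of pairs (point, radius)).\<close>
definition hyperconvex :: "'b::metric_space set \<Rightarrow> bool" where
  "hyperconvex Y \<longleftrightarrow>
     (\<forall>F :: ('b \<times> real) set.
        fst ` F \<subseteq> Y \<and> (\<forall>(x,r)\<in>F. r > 0) \<and>
        (\<forall>(x,r)\<in>F. \<forall>(y,s)\<in>F. dist x y \<le> r + s)
        \<longrightarrow> (\<exists>z\<in>Y. \<forall>(x,r)\<in>F. dist x z \<le> r))"

definition ext_hyperconvex :: "'a set \<Rightarrow> ('a \<Rightarrow> 'a \<Rightarrow> real) \<Rightarrow> 'a set \<Rightarrow> bool" where
  "ext_hyperconvex M d E \<longleftrightarrow> E \<subseteq> M \<and>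
     (\<forall>F :: ('a \<times> real) set.
        fst ` F \<subseteq> M \<and>
        (\<forall>(x,r)\<in>F. \<forall>(y,s)\<in>F. d x y \<le> r + s) \<and>
        (\<forall>(x,r)\<in>F. (INF e\<in>E. d x e) \<le> r)
        \<longrightarrow> (\<exists>z\<in>E. \<forall>(x,r)\<in>F. d x z \<le> r))"

definition cov :: "'b::metric_space set \<Rightarrow> 'b set" where
  "cov D = \<Inter> {cball c r | c r. D \<subseteq> cball c r}"

text \<open>Bounded nonexpansive maps defined on S (values outside S are irrelevant).\<close>
definition nonexp_maps :: "'a::metric_space set \<Rightarrow> ('a \<Rightarrow> 'b::metric_space) set" where
  "nonexp_maps S = {f. bounded (f ` S) \<and> (\<forall>x\<in>S. \<forall>y\<in>S. dist (f x) (f y) \<le> dist x y)}"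

definition sup_dist :: "'a set \<Rightarrow> ('a \<Rightarrow> 'b::metric_space) \<Rightarrow> ('a \<Rightarrow> 'b) \<Rightarrow> real" where
  "sup_dist S f g = (SUP x\<in>S. dist (f x) (g x))"

definition Phi_c :: "'a::metric_space set \<Rightarrow> ('a \<Rightarrow> 'b::metric_space) \<Rightarrow> ('a \<Rightarrow> 'b) set" where
  "Phi_c A f = {f' \<in> nonexp_maps UNIV. (\<forall>x\<in>A. f' x = f x) \<and> range f' \<subseteq> cov (f ` A)}"

end

theory Submission
  imports Defs
begin

text \<open>Given balls \<open>B(g\<^sub>i, r\<^sub>i)\<close> in \<open>\<N>(X,Y)\<close> as in the definition of external hyperconvexity,
  every point \<open>x\<close> carries the balls \<open>B(g\<^sub>i x, r\<^sub>i)\<close> together with all balls containing \<open>f(A)\<close>; these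
  balls meet pairwise and move nonexpansively with \<open>x\<close>. By Zorn's lemma a maximal nonexpansive
  partial map extending \<open>f\<close> and respecting the balls at every point exists, and hyperconvexity of
  \<open>Y\<close> shows that it is defined everywhere: at a new point \<open>x\<^sub>0\<close> intersect the balls
  \<open>B(y, d(x\<^sub>0,x))\<close> for \<open>(x,y)\<close> in the graph with the balls at \<open>x\<^sub>0\<close>. The resulting map lies in
  \<open>\<Phi>\<^sub>c(f)\<close> and within \<open>r\<^sub>i\<close> of every \<open>g\<^sub>i\<close>.\<close>

lemma hyperconvex_UNIV_nonneg_radii:
  fixes F :: "('b::metric_space \<times> real) set"
  assumes "hyperconvex (UNIV :: 'b set)"
    and "\<forall>(x,r)\<in>F. r \<ge> 0"
    and "\<forall>(x,r)\<in>F. \<forall>(y,s)\<in>F. dist x y \<le> r + s"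
  shows "\<exists>z. \<forall>(x,r)\<in>F. dist x z \<le> r"
proof (cases "\<exists>x. (x,0) \<in> F")
  case True
  then obtain x where "(x,0) \<in> F" by blast
  with assms(3) show ?thesis by (fastforce simp: dist_commute)
next
  case False
  with assms(2) have "\<forall>(x,r)\<in>F. r > 0" by fastforce
  with assms(1,3) show ?thesis unfolding hyperconvex_def by auto
qed

text \<open>\<open>K x\<close> is a family of closed balls \<open>(centre, radius)\<close> that must contain the value at \<open>x\<close>;
  a partial map is represented by its graph \<open>P\<close>.\<close>

definition nonexp_graph_within :: "('a::metric_space \<Rightarrow> ('b::metric_space \<times> real) set) \<Rightarrow> ('a \<times> 'b) set \<Rightarrow> bool"
  where "nonexp_graph_within K P \<longleftrightarrow>
    (\<forall>(x,y)\<in>P. \<forall>(x',y')\<in>P. dist y y' \<le> dist x x') \<and> (\<forall>(x,y)\<in>P. \<forall>(c,s)\<in>K x. dist c y \<le> s)"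

lemma nonexp_graph_within_Union_chain:
  assumes "chain\<^sub>\<subseteq> Ch" and "\<forall>P\<in>Ch. nonexp_graph_within K P"
  shows "nonexp_graph_within K (\<Union>Ch)"
  unfolding nonexp_graph_within_def
proof (intro conjI ballI, clarify)
  fix x y x' y' P P' assume xy: "(x,y) \<in> P" "P \<in> Ch" and xy': "(x',y') \<in> P'" "P' \<in> Ch"
  from assms(1) xy(2) xy'(2) have "P \<subseteq> P' \<or> P' \<subseteq> P"
    unfolding chain_subset_def by blast
  then obtain Q where "Q \<in> Ch" "(x,y) \<in> Q" "(x',y') \<in> Q"
    using xy xy' by blast
  with assms(2) show "dist y y' \<le> dist x x'"
    unfolding nonexp_graph_within_def by fast
next
  fix p assume "p \<in> \<Union>Ch"
  with assms(2) show "case p of (x,y) \<Rightarrow> \<forall>(c,s)\<in>K x. dist c y \<le> s"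
    unfolding nonexp_graph_within_def by fast
qed

lemma nonexp_graph_within_extend:
  fixes K :: "'a::metric_space \<Rightarrow> ('b::metric_space \<times> real) set"
  assumes hc: "hyperconvex (UNIV :: 'b set)"
    and K_meet: "\<And>x c s c' s'. (c,s) \<in> K x \<Longrightarrow> (c',s') \<in> K x \<Longrightarrow> dist c c' \<le> s + s'"
    and K_nonexp: "\<And>x x' c s. (c,s) \<in> K x \<Longrightarrow> \<exists>c'. (c',s) \<in> K x' \<and> dist c c' \<le> dist x x'"
    and P: "nonexp_graph_within K P"
  shows "\<exists>z. nonexp_graph_within K (insert (x0,z) P)"
proof -
  have P_nonexp: "dist y y' \<le> dist x x'" if "(x,y) \<in> P" "(x',y') \<in> P" for x y x' y'
    using P that unfolding nonexp_graph_within_def by blast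
  have P_within: "dist c y \<le> s" if "(x,y) \<in> P" "(c,s) \<in> K x" for x y c s
    using P that unfolding nonexp_graph_within_def by blast
  have P_K: "dist y c \<le> dist x0 x + s" if xy: "(x,y) \<in> P" and cs: "(c,s) \<in> K x0" for x y c s
  proof -
    obtain c' where c': "(c',s) \<in> K x" "dist c c' \<le> dist x0 x"
      using K_nonexp[OF cs] by blast
    have "dist y c \<le> dist c' y + dist c c'"
      using dist_triangle[of y c c'] by (simp add: dist_commute)
    with P_within[OF xy c'(1)] c'(2) show ?thesis by linarith
  qed
  define H where "H = (\<lambda>(x,y). (y, dist x0 x)) ` P \<union> K x0"
  have H_cases: "(\<exists>x. (x,y) \<in> P \<and> s = dist x0 x) \<or> (y,s) \<in> K x0" if "(y,s) \<in> H" for y s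
    using that unfolding H_def by auto
  have "s \<ge> 0" if "(y,s) \<in> H" for y s
    \<comment> \<open>a ball at \<open>x\<^sub>0\<close> has nonnegative radius because it meets itself\<close>
    using H_cases[OF that] K_meet[of y s x0 y s] by auto
  moreover have "dist y y' \<le> s + s'" if "(y,s) \<in> H" "(y',s') \<in> H" for y s y' s'
  proof -
    have P_P: "dist y y' \<le> dist x0 x + dist x0 x'" if "(x,y) \<in> P" "(x',y') \<in> P" for x y x' y'
      using P_nonexp[OF that] dist_triangle3[of x x' x0] by linarith
    have K_P: "dist c y \<le> s + dist x0 x" if "(x,y) \<in> P" "(c,s) \<in> K x0" for x y c s
      using P_K[OF that] by (simp add: dist_commute)
    from H_cases[OF that(1)] H_cases[OF that(2)] show ?thesis
      by (elim disjE exE conjE) (simp_all add: P_P P_K K_P K_meet)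
  qed
  ultimately obtain z where z: "\<forall>(y,s)\<in>H. dist y z \<le> s"
    using hyperconvex_UNIV_nonneg_radii[OF hc, of H] by blast
  have z_P: "dist y z \<le> dist x0 x" if "(x,y) \<in> P" for x y
    using z that unfolding H_def by force
  have z_K: "dist c z \<le> s" if "(c,s) \<in> K x0" for c s
    using z that unfolding H_def by blast
  have z_P': "dist z y \<le> dist x0 x" and z_P'': "dist y z \<le> dist x x0" if "(x,y) \<in> P" for x y
    using z_P[OF that] by (simp_all add: dist_commute)
  have "dist y y' \<le> dist x x'" if "(x,y) \<in> insert (x0,z) P" "(x',y') \<in> insert (x0,z) P"
    for x y x' y'
    using that P_nonexp z_P' z_P'' by auto
  moreover have "dist c y \<le> s" if "(x,y) \<in> insert (x0,z) P" "(c,s) \<in> K x" for x y c s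
    using that P_within z_K by auto
  ultimately have "nonexp_graph_within K (insert (x0,z) P)"
    unfolding nonexp_graph_within_def by blast
  then show ?thesis ..
qed

lemma nonexp_graph_within_maximal:
  assumes "nonexp_graph_within K P0"
  shows "\<exists>M. P0 \<subseteq> M \<and> nonexp_graph_within K M \<and>
              (\<forall>P. M \<subseteq> P \<and> nonexp_graph_within K P \<longrightarrow> P = M)"
proof -
  define Q where "Q = {P. P0 \<subseteq> P \<and> nonexp_graph_within K P}"
  have "\<exists>U\<in>Q. \<forall>P\<in>Ch. P \<subseteq> U" if "Ch \<in> chains Q" for Ch
  proof (cases "Ch = {}")
    case True
    have "P0 \<in> Q" using assms unfolding Q_def by blast
    with True show ?thesis by blast
  next
    case False
    from that have Ch: "chain\<^sub>\<subseteq> Ch" "Ch \<subseteq> Q" unfolding chains_def by auto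
    from False Ch(2) have "P0 \<subseteq> \<Union>Ch" unfolding Q_def by blast
    moreover from Ch have "nonexp_graph_within K (\<Union>Ch)"
      unfolding Q_def by (auto intro: nonexp_graph_within_Union_chain)
    ultimately have "\<Union>Ch \<in> Q" unfolding Q_def by blast
    then show ?thesis by blast
  qed
  then have "\<exists>M\<in>Q. \<forall>P\<in>Q. M \<subseteq> P \<longrightarrow> P = M"
    by (intro Zorn_Lemma2) blast
  then obtain M where M: "M \<in> Q" and M_max: "\<forall>P\<in>Q. M \<subseteq> P \<longrightarrow> P = M" ..
  from M have "P0 \<subseteq> M" "nonexp_graph_within K M" unfolding Q_def by auto
  moreover have "P = M" if "M \<subseteq> P" "nonexp_graph_within K P" for P
  proof -
    from that \<open>P0 \<subseteq> M\<close> have "P \<in> Q" unfolding Q_def by blast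
    with M_max that(1) show ?thesis by blast
  qed
  ultimately show ?thesis by blast
qed

lemma nonexp_extension_within_balls:
  fixes f :: "'a::metric_space \<Rightarrow> 'b::metric_space" and K :: "'a \<Rightarrow> ('b \<times> real) set"
  assumes hc: "hyperconvex (UNIV :: 'b set)"
    and f_nonexp: "\<forall>x\<in>A. \<forall>y\<in>A. dist (f x) (f y) \<le> dist x y"
    and f_within: "\<And>a c s. a \<in> A \<Longrightarrow> (c,s) \<in> K a \<Longrightarrow> dist c (f a) \<le> s"
    and K_meet: "\<And>x c s c' s'. (c,s) \<in> K x \<Longrightarrow> (c',s') \<in> K x \<Longrightarrow> dist c c' \<le> s + s'"
    and K_nonexp: "\<And>x x' c s. (c,s) \<in> K x \<Longrightarrow> \<exists>c'. (c',s) \<in> K x' \<and> dist c c' \<le> dist x x'"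
  shows "\<exists>h. (\<forall>x y. dist (h x) (h y) \<le> dist x y) \<and> (\<forall>a\<in>A. h a = f a) \<and>
              (\<forall>x. \<forall>(c,s)\<in>K x. dist c (h x) \<le> s)"
proof -
  have "nonexp_graph_within K ((\<lambda>a. (a, f a)) ` A)"
    using f_nonexp f_within unfolding nonexp_graph_within_def by auto
  then obtain M where M_graph: "(\<lambda>a. (a, f a)) ` A \<subseteq> M" and M_within: "nonexp_graph_within K M"
    and M_max: "\<forall>P. M \<subseteq> P \<and> nonexp_graph_within K P \<longrightarrow> P = M"
    using nonexp_graph_within_maximal[of K] by metis
  have M_total: "\<exists>y. (x,y) \<in> M" for x
  proof -
    have "\<exists>z. nonexp_graph_within K (insert (x,z) M)"
      by (rule nonexp_graph_within_extend[OF hc _ _ M_within]) (use K_meet K_nonexp in blast)+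
    then obtain z where "nonexp_graph_within K (insert (x,z) M)" ..
    with M_max have "insert (x,z) M = M" by (simp add: subset_insertI)
    then show ?thesis by blast
  qed
  define h where "h x = (SOME y. (x,y) \<in> M)" for x
  have hM: "(x, h x) \<in> M" for x
    unfolding h_def using M_total by (rule someI_ex)
  have M_nonexp: "dist y y' \<le> dist x x'" if "(x,y) \<in> M" "(x',y') \<in> M" for x y x' y'
    using M_within that unfolding nonexp_graph_within_def by blast
  have h_nonexp: "\<forall>x y. dist (h x) (h y) \<le> dist x y"
    using M_nonexp[OF hM hM] by blast
  have h_ext: "\<forall>a\<in>A. h a = f a"
  proof
    fix a assume "a \<in> A"
    with M_graph have "(a, f a) \<in> M" by blast
    from M_nonexp[OF hM[of a] this] show "h a = f a" by simp
  qed
  have h_within: "\<forall>x. \<forall>(c,s)\<in>K x. dist c (h x) \<le> s"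
    using M_within hM unfolding nonexp_graph_within_def by blast
  from h_nonexp h_ext h_within show ?thesis by blast
qed

lemma dist_le_sup_dist:
  assumes "bounded (range g)" and "bounded (range h)"
  shows "dist (g x) (h x) \<le> sup_dist UNIV g h"
proof -
  obtain a e where a: "\<And>y. dist a (g y) \<le> e"
    using assms(1) unfolding bounded_def by blast
  obtain b e' where b: "\<And>y. dist b (h y) \<le> e'"
    using assms(2) unfolding bounded_def by blast
  have "dist (g y) (h y) \<le> e + dist a b + e'" for y
  proof -
    have "dist (g y) (h y) \<le> dist a (g y) + dist a b + dist b (h y)"
      using dist_triangle[of "g y" "h y" a] dist_triangle[of a "h y" b] by (simp add: dist_commute)
    with a[of y] b[of y] show ?thesis by linarith
  qed
  then have "bdd_above (range (\<lambda>y. dist (g y) (h y)))"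
    by (meson bdd_aboveI2)
  then show ?thesis
    unfolding sup_dist_def by (rule cSUP_upper[OF UNIV_I])
qed

lemma sup_dist_le:
  assumes "\<And>x. dist (g x) (h x) \<le> r"
  shows "sup_dist UNIV g h \<le> r"
  unfolding sup_dist_def using assms by (intro cSUP_least) auto

lemma dist_le_of_Inf_sup_dist_le:
  assumes E: "E \<noteq> {}" "\<forall>e\<in>E. bounded (range e)" "\<forall>e\<in>E. dist c (e x) \<le> s"
    and g: "bounded (range g)" "(INF e\<in>E. sup_dist UNIV g e) \<le> r"
  shows "dist c (g x) \<le> s + r"
proof (rule field_le_epsilon)
  fix \<epsilon> :: real assume "\<epsilon> > 0"
  have "0 \<le> sup_dist UNIV g e" if "e \<in> E" for e
    using dist_le_sup_dist[OF g(1)] E(2) that zero_le_dist order_trans by blast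
  then have "bdd_below ((\<lambda>e. sup_dist UNIV g e) ` E)"
    by (meson bdd_belowI2)
  moreover have "(INF e\<in>E. sup_dist UNIV g e) < r + \<epsilon>"
    using g(2) \<open>\<epsilon> > 0\<close> by linarith
  ultimately obtain e where e: "e \<in> E" "sup_dist UNIV g e < r + \<epsilon>"
    using cINF_less_iff[OF E(1)] by blast
  have "dist c (g x) \<le> dist c (e x) + dist (g x) (e x)"
    using dist_triangle[of c "g x" "e x"] by (simp add: dist_commute)
  also have "\<dots> \<le> s + sup_dist UNIV g e"
    using E(2,3) e(1) dist_le_sup_dist[OF g(1)] by (simp add: add_mono)
  finally show "dist c (g x) \<le> s + r + \<epsilon>"
    using e(2) by linarith
qed

lemma cov_subset_cball: "D \<subseteq> cball c r \<Longrightarrow> cov D \<subseteq> cball c r"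
  unfolding cov_def by blast

lemma Phi_c_element_near_maps:
  fixes A :: "'a::metric_space set" and f :: "'a \<Rightarrow> 'b::metric_space"
    and F :: "(('a \<Rightarrow> 'b) \<times> real) set"
  assumes A: "A \<noteq> {}"
    and hc: "hyperconvex (UNIV :: 'b set)"
    and f: "f \<in> nonexp_maps A"
    and F_nonexp: "\<And>g r x x'. (g,r) \<in> F \<Longrightarrow> dist (g x) (g x') \<le> dist x x'"
    and F_meet: "\<And>g r g' r' x. (g,r) \<in> F \<Longrightarrow> (g',r') \<in> F \<Longrightarrow> dist (g x) (g' x) \<le> r + r'"
    and F_A: "\<And>g r a. (g,r) \<in> F \<Longrightarrow> a \<in> A \<Longrightarrow> dist (f a) (g a) \<le> r"
    and F_cov: "\<And>g r x c s. (g,r) \<in> F \<Longrightarrow> f ` A \<subseteq> cball c s \<Longrightarrow> dist c (g x) \<le> s + r"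
  shows "\<exists>h\<in>Phi_c A f. \<forall>(g,r)\<in>F. \<forall>x. dist (h x) (g x) \<le> r"
proof -
  define C where "C = {(c,s). f ` A \<subseteq> cball c s}"
  define K where "K x = (\<lambda>(g,r). (g x, r)) ` F \<union> C" for x
  have K_cases: "(\<exists>g. (g,s) \<in> F \<and> c = g x) \<or> f ` A \<subseteq> cball c s" if "(c,s) \<in> K x" for c s x
    using that unfolding K_def C_def by auto
  obtain a where a: "a \<in> A" using A by blast
  have C_meet: "dist c c' \<le> s + s'" if "f ` A \<subseteq> cball c s" "f ` A \<subseteq> cball c' s'" for c s c' s'
  proof -
    from that a have "dist c (f a) \<le> s" "dist c' (f a) \<le> s'" by auto
    then show ?thesis using dist_triangle3[of c c' "f a"] by (simp add: dist_commute)
  qed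
  have F_cov': "dist (g x) c \<le> r + s" if "(g,r) \<in> F" "f ` A \<subseteq> cball c s" for g r x c s
    using F_cov[OF that] by (simp add: dist_commute add.commute)
  have "\<exists>h. (\<forall>x y. dist (h x) (h y) \<le> dist x y) \<and> (\<forall>a\<in>A. h a = f a) \<and>
             (\<forall>x. \<forall>(c,s)\<in>K x. dist c (h x) \<le> s)"
  proof (rule nonexp_extension_within_balls[OF hc])
    show "\<forall>x\<in>A. \<forall>y\<in>A. dist (f x) (f y) \<le> dist x y"
      using f unfolding nonexp_maps_def by blast
    show "dist c (f a) \<le> s" if "a \<in> A" "(c,s) \<in> K a" for a c s
      using K_cases[OF that(2)] F_A[OF _ that(1)] that(1) by (auto simp: dist_commute)
    show "dist c c' \<le> s + s'" if "(c,s) \<in> K x" "(c',s') \<in> K x" for x c s c' s'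
      using K_cases[OF that(1)] K_cases[OF that(2)]
      by (elim disjE exE conjE) (simp_all add: F_meet F_cov F_cov' C_meet)
    show "\<exists>c'. (c',s) \<in> K x' \<and> dist c c' \<le> dist x x'" if "(c,s) \<in> K x" for x x' c s
    proof (cases "f ` A \<subseteq> cball c s")
      case True
      then have "(c,s) \<in> K x'" unfolding K_def C_def by blast
      then show ?thesis by auto
    next
      case False
      with K_cases[OF that] obtain g where "(g,s) \<in> F" "c = g x" by blast
      moreover from this have "(g x', s) \<in> K x'" unfolding K_def by force
      ultimately show ?thesis using F_nonexp by blast
    qed
  qed
  then obtain h where h_nonexp: "\<forall>x y. dist (h x) (h y) \<le> dist x y"
    and h_ext: "\<forall>a\<in>A. h a = f a" and h_within: "\<forall>x. \<forall>(c,s)\<in>K x. dist c (h x) \<le> s"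
    by blast
  have h_cov: "h x \<in> cball c s" if "f ` A \<subseteq> cball c s" for x c s
  proof -
    from that have "(c,s) \<in> K x" unfolding K_def C_def by blast
    with h_within show ?thesis by auto
  qed
  obtain c0 s0 where "f ` A \<subseteq> cball c0 s0"
    using f bounded_subset_cball unfolding nonexp_maps_def by blast
  with h_cov have "bounded (range h)"
    by (blast intro: bounded_subset[OF bounded_cball])
  with h_nonexp h_ext h_cov have "h \<in> Phi_c A f"
    unfolding Phi_c_def nonexp_maps_def cov_def by blast
  moreover have "dist (h x) (g x) \<le> r" if "(g,r) \<in> F" for g r x
  proof -
    from that have "(g x, r) \<in> K x" unfolding K_def by force
    with h_within show ?thesis by (auto simp: dist_commute)
  qed
  ultimately show ?thesis by blast
qed

lemma Phi_c_nonempty: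
  assumes "A \<noteq> {}" and "hyperconvex (UNIV :: 'b set)" and "f \<in> nonexp_maps A"
  shows "Phi_c A (f :: 'a::metric_space \<Rightarrow> 'b::metric_space) \<noteq> {}"
proof -
  have "\<exists>h\<in>Phi_c A f. \<forall>(g,r)\<in>{}. \<forall>x. dist (h x) (g x) \<le> r"
    by (rule Phi_c_element_near_maps[OF assms]) auto
  then show ?thesis by blast
qed

lemma near_Phi_c_pointwise:
  assumes "Phi_c A f \<noteq> {}" and g: "bounded (range g)"
    and "(INF e\<in>Phi_c A f. sup_dist UNIV g e) \<le> r"
  shows "a \<in> A \<Longrightarrow> dist (f a) (g a) \<le> r"
    and "f ` A \<subseteq> cball c s \<Longrightarrow> dist c (g x) \<le> s + r"
proof -
  have Phi_bounded: "\<forall>e\<in>Phi_c A f. bounded (range e)"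
    by (simp add: Phi_c_def nonexp_maps_def)
  note near = dist_le_of_Inf_sup_dist_le[OF assms(1) Phi_bounded _ g assms(3)]
  show "dist (f a) (g a) \<le> r" if "a \<in> A"
    using near[of "f a" a 0] that by (simp add: Phi_c_def)
  show "dist c (g x) \<le> s + r" if "f ` A \<subseteq> cball c s"
  proof (rule near)
    show "\<forall>e\<in>Phi_c A f. dist c (e x) \<le> s"
    proof
      fix e assume "e \<in> Phi_c A f"
      then have "e x \<in> cov (f ` A)" by (auto simp: Phi_c_def)
      with cov_subset_cball[OF that] show "dist c (e x) \<le> s" by auto
    qed
  qed
qed

theorem lemma5p12:
  fixes A :: "'a::metric_space set" and f :: "'a \<Rightarrow> 'b::metric_space"
  assumes "A \<noteq> {}"
    and "hyperconvex (UNIV :: 'b set)"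
    and "f \<in> nonexp_maps A"
  shows "ext_hyperconvex (nonexp_maps UNIV) (sup_dist UNIV) (Phi_c A f)"
  unfolding ext_hyperconvex_def
proof (intro conjI allI impI)
  show "Phi_c A f \<subseteq> nonexp_maps UNIV"
    by (auto simp: Phi_c_def)
  fix F :: "(('a \<Rightarrow> 'b) \<times> real) set"
  assume "fst ` F \<subseteq> nonexp_maps UNIV \<and>
    (\<forall>(g,r)\<in>F. \<forall>(g',r')\<in>F. sup_dist UNIV g g' \<le> r + r') \<and>
    (\<forall>(g,r)\<in>F. (INF e\<in>Phi_c A f. sup_dist UNIV g e) \<le> r)"
  then have F_maps: "fst ` F \<subseteq> nonexp_maps UNIV"
    and F_meet: "\<And>g r g' r'. (g,r) \<in> F \<Longrightarrow> (g',r') \<in> F \<Longrightarrow> sup_dist UNIV g g' \<le> r + r'"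
    and F_near: "\<And>g r. (g,r) \<in> F \<Longrightarrow> (INF e\<in>Phi_c A f. sup_dist UNIV g e) \<le> r"
    by auto
  have F_bounded: "bounded (range g)" and F_nonexp: "\<forall>x x'. dist (g x) (g x') \<le> dist x x'"
    if "(g,r) \<in> F" for g r
    using F_maps rev_image_eqI[OF that, of g fst] unfolding nonexp_maps_def by auto
  note near = near_Phi_c_pointwise[OF Phi_c_nonempty[OF assms] F_bounded F_near]
  have "\<exists>h\<in>Phi_c A f. \<forall>(g,r)\<in>F. \<forall>x. dist (h x) (g x) \<le> r"
  proof (rule Phi_c_element_near_maps[OF assms])
    show "dist (g x) (g x') \<le> dist x x'" if "(g,r) \<in> F" for g r x x'
      using F_nonexp[OF that] by blast
    show "dist (g x) (g' x) \<le> r + r'" if "(g,r) \<in> F" "(g',r') \<in> F" for g r g' r' x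
      using dist_le_sup_dist[OF F_bounded F_bounded, OF that, of x] F_meet[OF that] by linarith
    show "dist (f a) (g a) \<le> r" if "(g,r) \<in> F" "a \<in> A" for g r a
      using near(1)[OF that(1) that(1) that(2)] .
    show "dist c (g x) \<le> s + r" if "(g,r) \<in> F" "f ` A \<subseteq> cball c s" for g r x c s
      using near(2)[OF that(1) that(1) that(2)] .
  qed
  then obtain h where "h \<in> Phi_c A f" and h_near: "\<forall>(g,r)\<in>F. \<forall>x. dist (h x) (g x) \<le> r" ..
  moreover have "sup_dist UNIV g h \<le> r" if "(g,r) \<in> F" for g r
    using h_near that by (intro sup_dist_le) (auto simp: dist_commute)
  ultimately show "\<exists>h\<in>Phi_c A f. \<forall>(g,r)\<in>F. sup_dist UNIV g h \<le> r"
    by blast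
qed

end
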